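(* Let $d\ge 1$, let $F=(F_1,\dots,F_k)$ be $d\times d$ positive semidefinite matrices with $\sum_{j=1}^k F_j\preceq \mathbb{I}$, let $\rho_0$ be a $d\times d$ density matrix, and let $\sigma_0=\mathbb{I}/d$. Consider the quantum iterative scaling (QIS) update map $\lambda^{(t)}\mapsto\lambda^{(t+1)}$ on $\mathbb{R}^k$ given by $$Y^{(t)}=\exp\bigl(\ln\sigma_0+\lambda^{(t)}\cdot F\bigr),\qquad \delta^{(t)}_j=\ln\langle F_j,\rho_0\rangle-\ln\bigl\langle F_j, Y^{(t)}/\operatorname{tr}Y^{(t)}\bigr\rangle,\qquad \lambda^{(t+1)}=\lambda^{(t)}+\delta^{(t)}.$$ Then the Jacobian matrix of this map at $\lambda=\lambda^{(t)}$ equals $\mathbb{I}-P^{-1}L$, where, with $\xi=\exp(\lambda\cdot F)/\operatorname{tr}\exp(\lambda\cdot F)$, $P=\sum_j \operatorname{tr}(F_j\xi)\,|j\rangle\langle j|$ is the $k\times k$ diagonal matrix of the mean values of the $F_j$ in $\xi$, and $L$ is the $k\times k$ Hessian matrix of $\lambda\mapsto\ln\operatorname{tr}\exp(\lambda\cdot F)$.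
   Context: For real $\lambda\in\mathbb{R}^k$, $\lambda\cdot F=\sum_j\lambda_jF_j$. For matrices, $\langle A,B\rangle=\operatorname{tr}(A^\dagger B)$. $A\preceq B$ means $B-A$ is positive semidefinite. The map is considered at points where all logarithms are defined (the relevant traces are positive). *)

theory Defs
  imports "HOL-Analysis.Analysis"
begin

type_synonym 'd cmat = "complex^'d^'d"

definition adjoint_mat :: "'d::finite cmat \<Rightarrow> 'd cmat" where
  "adjoint_mat A = (\<chi> i j. cnj (A $ j $ i))"

definition hermitian :: "'d::finite cmat \<Rightarrow> bool" where
  "hermitian A \<longleftrightarrow> adjoint_mat A = A"

definition psd :: "'d::finite cmat \<Rightarrow> bool" where
  "psd A \<longleftrightarrow> hermitian A \<and>
     (\<forall>x::complex^'d. 0 \<le> Re (\<Sum>i\<in>UNIV. cnj (x $ i) * (A *v x) $ i))"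

definition loewner_le :: "'d::finite cmat \<Rightarrow> 'd cmat \<Rightarrow> bool" where
  "loewner_le A B \<longleftrightarrow> psd (B - A)"

definition density_matrix :: "'d::finite cmat \<Rightarrow> bool" where
  "density_matrix \<rho> \<longleftrightarrow> psd \<rho> \<and> trace \<rho> = 1"

definition hs_inner :: "'d::finite cmat \<Rightarrow> 'd cmat \<Rightarrow> complex" where
  "hs_inner A B = trace (adjoint_mat A ** B)"

fun mpow :: "'d::finite cmat \<Rightarrow> nat \<Rightarrow> 'd cmat" where
  "mpow A 0 = mat 1"
| "mpow A (Suc n) = A ** mpow A n"

definition mexp :: "'d::finite cmat \<Rightarrow> 'd cmat" where
  "mexp A = (\<Sum>n. (1 / fact n) *\<^sub>R mpow A n)"

text \<open>Matrix logarithm: the (unique) Hermitian matrix whose exponential is A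
  (used only for positive definite A).\<close>
definition mlog :: "'d::finite cmat \<Rightarrow> 'd cmat" where
  "mlog A = (THE H. hermitian H \<and> mexp H = A)"

definition mdiv :: "'d::finite cmat \<Rightarrow> complex \<Rightarrow> 'd cmat" where
  "mdiv A c = (\<chi> i j. A $ i $ j / c)"

definition lin_comb :: "real^'k \<Rightarrow> ('k::finite \<Rightarrow> 'd::finite cmat) \<Rightarrow> 'd cmat" where
  "lin_comb lam F = (\<Sum>j\<in>UNIV. lam $ j *\<^sub>R F j)"

definition maxmixed :: "'d::finite cmat" where
  "maxmixed = (1 / real CARD('d)) *\<^sub>R mat 1"

text \<open>The QIS update map lambda^(t) |-> lambda^(t+1). The traces involved are real
  (products of PSD matrices), so logarithms are taken of their real parts.\<close>
definition qis_map :: "('k::finite \<Rightarrow> 'd::finite cmat) \<Rightarrow> 'd cmat \<Rightarrow> real^'k \<Rightarrow> real^'k" where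
  "qis_map F \<rho>0 lam =
     (let Y = mexp (mlog maxmixed + lin_comb lam F)
      in lam + (\<chi> j. ln (Re (hs_inner (F j) \<rho>0)) - ln (Re (hs_inner (F j) (mdiv Y (trace Y))))))"

definition xi_state :: "('k::finite \<Rightarrow> 'd::finite cmat) \<Rightarrow> real^'k \<Rightarrow> 'd cmat" where
  "xi_state F lam = mdiv (mexp (lin_comb lam F)) (trace (mexp (lin_comb lam F)))"

definition P_mat :: "('k::finite \<Rightarrow> 'd::finite cmat) \<Rightarrow> real^'k \<Rightarrow> real^'k^'k" where
  "P_mat F lam = (\<chi> i j. if i = j then Re (trace (F j ** xi_state F lam)) else 0)"

definition log_partition :: "('k::finite \<Rightarrow> 'd::finite cmat) \<Rightarrow> real^'k \<Rightarrow> real" where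
  "log_partition F lam = ln (Re (trace (mexp (lin_comb lam F))))"

definition gradient :: "(real^'k \<Rightarrow> real) \<Rightarrow> real^'k \<Rightarrow> real^'k" where
  "gradient g x = (\<chi> j. frechet_derivative g (at x) (axis j 1))"

definition hessian :: "(real^'k::finite \<Rightarrow> real) \<Rightarrow> real^'k \<Rightarrow> real^'k^'k" where
  "hessian g x = jacobian (gradient g) (at x)"

end

theory Submission
  imports Defs
begin

text \<open>Write \<open>g(\<lambda>)\<close> for the gradient of \<open>\<lambda> \<mapsto> ln tr exp(\<lambda>\<cdot>F)\<close>. Because the trace is cyclic, the
  Frechet derivative of \<open>exp\<close> at \<open>A\<close> in direction \<open>H\<close> has the same trace as \<open>exp(A) H\<close>, so
  \<open>g\<^sub>j(\<lambda>) = tr(F\<^sub>j \<xi>)\<close> is the mean value of \<open>F\<^sub>j\<close> in \<open>\<xi>\<close>. Since \<open>\<sigma>\<^sub>0 = I/d\<close> is scalar, its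
  logarithm commutes with \<open>\<lambda>\<cdot>F\<close> and \<open>Y/tr Y = \<xi>\<close>; hence the QIS map is
  \<open>\<lambda> \<mapsto> \<lambda> + (ln\<langle>F\<^sub>j,\<rho>\<^sub>0\<rangle> - ln g\<^sub>j(\<lambda>))\<^sub>j\<close>, whose Jacobian is \<open>I - diag(g)\<^sup>-\<^sup>1 Dg = I - P\<^sup>-\<^sup>1 L\<close>.
  The analytic input is the Frechet differentiability of \<open>exp\<close> on the Banach algebra of
  matrices, obtained by differentiating the exponential series termwise.\<close>

lemma matrix_vector_mult_scaleR: "(A::'d::finite cmat) *v (c *\<^sub>R x) = c *\<^sub>R (A *v x)"
  by (simp add: vec_eq_iff matrix_vector_mult_def scaleR_sum_right)

lemma bounded_linear_matrix_vector_mult: "bounded_linear (\<lambda>x::complex^'d::finite. (A::'d cmat) *v x)"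
proof -
  have "linear (\<lambda>x::complex^'d. A *v x)"
    by (rule linearI) (simp_all add: matrix_vector_right_distrib matrix_vector_mult_scaleR)
  then show ?thesis by (rule linear_conv_bounded_linear[THEN iffD1])
qed

lemma matrix_vector_mult_axis: "((A::'d::finite cmat) *v axis j 1) $ i = A $ i $ j"
  by (simp add: matrix_vector_mult_def axis_def if_distrib cong: if_cong)

lemma matrix_eq_0_if_mult_vector_eq_0: "(\<And>x. (A::'d::finite cmat) *v x = 0) \<Longrightarrow> A = 0"
  by (metis matrix_vector_mult_axis vec_eq_iff zero_index)

lemma matrix_add_rdistrib: "(B + C) ** (A::'d::finite cmat) = B ** A + C ** A"
  by (vector matrix_matrix_mult_def sum.distrib[symmetric] field_simps)

lemma norm_le_sum_norm_nth: "norm (x::'a::real_normed_vector^'n::finite) \<le> (\<Sum>i\<in>UNIV. norm (x $ i))"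
  by (simp add: norm_vec_def L2_set_le_sum)

lemma norm_axis_one: "norm (axis j (1::'a::real_normed_algebra_1)) = 1"
proof -
  have "(norm (axis j (1::'a) $ i))\<^sup>2 = (if i = j then 1 else 0)" for i
    by (auto simp: axis_def)
  then show ?thesis by (simp add: norm_vec_def L2_set_def)
qed

lemma norm_entry_le_onorm: "norm ((A::'d::finite cmat) $ i $ j) \<le> onorm (\<lambda>x. A *v x)"
proof -
  have "norm (A $ i $ j) \<le> norm (A *v axis j 1)"
    using Finite_Cartesian_Product.norm_nth_le[of "A *v axis j 1" i] by (simp add: matrix_vector_mult_axis)
  also have "\<dots> \<le> onorm (\<lambda>x. A *v x) * norm (axis j (1::complex))"
    by (rule onorm[OF bounded_linear_matrix_vector_mult])
  finally show ?thesis by (simp add: norm_axis_one)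
qed

lemma norm_matrix_le_onorm:
  "norm (A::'d::finite cmat) \<le> real CARD('d) * real CARD('d) * onorm (\<lambda>x. A *v x)"
proof -
  have "norm A \<le> (\<Sum>i\<in>UNIV. norm (A $ i))" by (rule norm_le_sum_norm_nth)
  also have "\<dots> \<le> (\<Sum>i\<in>UNIV. \<Sum>j\<in>UNIV. norm (A $ i $ j))"
    by (intro sum_mono norm_le_sum_norm_nth)
  also have "\<dots> \<le> (\<Sum>i\<in>(UNIV::'d set). \<Sum>j\<in>(UNIV::'d set). onorm (\<lambda>x. A *v x))"
    by (intro sum_mono norm_entry_le_onorm)
  finally show ?thesis by simp
qed

lemma adjoint_mat_mult: "adjoint_mat (A ** B) = adjoint_mat B ** adjoint_mat (A::'d::finite cmat)"
  by (simp add: adjoint_mat_def matrix_matrix_mult_def vec_eq_iff mult.commute)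

lemma adjoint_mat_scaleR: "adjoint_mat (r *\<^sub>R A) = r *\<^sub>R adjoint_mat (A::'d::finite cmat)"
  by (simp add: adjoint_mat_def vec_eq_iff)

lemma bounded_linear_adjoint_mat: "bounded_linear (adjoint_mat :: 'd::finite cmat \<Rightarrow> 'd cmat)"
  by (rule linear_conv_bounded_linear[THEN iffD1], rule linearI)
    (simp_all add: adjoint_mat_def vec_eq_iff)

lemma hermitian_scaleR: "hermitian A \<Longrightarrow> hermitian (r *\<^sub>R A)"
  by (simp add: hermitian_def adjoint_mat_scaleR)

lemma hermitian_add: "hermitian A \<Longrightarrow> hermitian B \<Longrightarrow> hermitian (A + B)"
  by (simp add: hermitian_def adjoint_mat_def vec_eq_iff)

lemma hermitian_sum: "(\<And>j. hermitian (A j)) \<Longrightarrow> hermitian (\<Sum>j\<in>S. A j)"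
  using linear_sum[OF bounded_linear.linear[OF bounded_linear_adjoint_mat], of A S]
  by (simp add: hermitian_def)

lemma hermitian_nth_swap: "hermitian A \<Longrightarrow> A $ i $ j = cnj (A $ j $ i)"
  unfolding hermitian_def adjoint_mat_def by (metis vec_lambda_beta)

lemma hermitian_cnj_nth: "hermitian A \<Longrightarrow> cnj (A $ i $ j) = A $ j $ i"
  by (simp add: hermitian_nth_swap[of A j i])

lemma trace_hermitian_real:
  assumes "hermitian A"
  shows "trace A = complex_of_real (Re (trace A))"
proof -
  have "Im (A $ i $ i) = 0" for i
    using hermitian_nth_swap[OF assms, of i i] by (simp add: complex_eq_iff)
  then show ?thesis by (simp add: complex_eq_iff trace_def Im_sum)
qed

lemma trace_scaleR: "trace (r *\<^sub>R A) = r *\<^sub>R trace (A::'d::finite cmat)"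
  by (simp add: trace_def scaleR_sum_right)

lemma scaleR_mat_1_commute: "(c *\<^sub>R mat 1) ** A = A ** (c *\<^sub>R mat 1 :: 'd::finite cmat)"
  by (simp add: matrix_scalar_ac scalar_matrix_assoc[symmetric])

lemma hermitian_inner_swap:
  assumes "hermitian (G::'d::finite cmat)"
  shows "(\<Sum>i\<in>UNIV. cnj (y $ i) * (G *v z) $ i) = (\<Sum>i\<in>UNIV. cnj ((G *v y) $ i) * z $ i)"
proof -
  have "(\<Sum>i\<in>UNIV. cnj (y $ i) * (G *v z) $ i) = (\<Sum>i\<in>UNIV. \<Sum>j\<in>UNIV. cnj (y $ i) * G $ i $ j * z $ j)"
    by (simp add: matrix_vector_mult_def sum_distrib_left mult.assoc)
  also have "\<dots> = (\<Sum>j\<in>UNIV. \<Sum>i\<in>UNIV. cnj (y $ i) * G $ i $ j * z $ j)" by (rule sum.swap)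
  also have "\<dots> = (\<Sum>j\<in>UNIV. cnj ((G *v y) $ j) * z $ j)"
    by (simp add: matrix_vector_mult_def sum_distrib_left sum_distrib_right hermitian_cnj_nth[OF assms] mult_ac)
  finally show ?thesis .
qed

text \<open>If \<open>A = G\<^sup>2\<close> with \<open>G\<close> Hermitian and \<open>A\<^sup>2 = 1\<close>, then \<open>y = A x - x\<close> satisfies \<open>A y = -y\<close>,
  while \<open>\<langle>y, A y\<rangle> = \<parallel>G y\<parallel>\<^sup>2 \<ge> 0\<close>; hence \<open>y = 0\<close>.\<close>

lemma hermitian_square_eq_mat_1:
  assumes G: "hermitian G" and "(G ** G) ** (G ** G) = mat (1::complex)"
  shows "G ** G = (mat 1 :: 'd::finite cmat)"
proof -
  define A where "A = G ** G"
  have "A *v x = x" for x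
  proof -
    define y where "y = A *v x - x"
    have Ay: "A *v y = - y"
      using assms(2) by (simp add: y_def A_def[symmetric] matrix_vector_mult_diff_distrib matrix_vector_mul_assoc)
    have "(\<Sum>i\<in>UNIV. cnj (y $ i) * (A *v y) $ i) = (\<Sum>i\<in>UNIV. cnj ((G *v y) $ i) * (G *v y) $ i)"
      unfolding A_def matrix_vector_mul_assoc[symmetric] by (rule hermitian_inner_swap[OF G])
    then have "- (\<Sum>i\<in>UNIV. cnj (y $ i) * y $ i) = (\<Sum>i\<in>UNIV. cnj ((G *v y) $ i) * (G *v y) $ i)"
      by (simp add: Ay sum_negf)
    then have "- (\<Sum>i\<in>UNIV. Re (cnj (y $ i) * y $ i)) = (\<Sum>i\<in>UNIV. Re (cnj ((G *v y) $ i) * (G *v y) $ i))"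
      by (metis Re_sum uminus_complex.sel(1))
    moreover have "Re (cnj w * w) = (cmod w)\<^sup>2" for w
      by (metis Re_complex_of_real complex_norm_square mult.commute)
    ultimately have "(\<Sum>i\<in>UNIV. (cmod (y $ i))\<^sup>2) + (\<Sum>i\<in>UNIV. (cmod ((G *v y) $ i))\<^sup>2) = 0"
      by simp
    then have "(\<Sum>i\<in>UNIV. (cmod (y $ i))\<^sup>2) = 0"
      by (simp add: add_nonneg_eq_0_iff sum_nonneg)
    then have "y = 0" by (simp add: sum_nonneg_eq_0_iff vec_eq_iff)
    then show ?thesis by (simp add: y_def)
  qed
  then have "A - mat 1 = 0"
    by (intro matrix_eq_0_if_mult_vector_eq_0) (simp add: matrix_vector_mult_diff_rdistrib)
  then show ?thesis by (simp add: A_def)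
qed

lemma Re_trace_square_hermitian:
  assumes "hermitian G"
  shows "Re (trace (G ** G)) = (\<Sum>i\<in>UNIV. \<Sum>k\<in>UNIV. (cmod (G $ i $ k))\<^sup>2)"
proof -
  have "Re (G $ i $ k * G $ k $ i) = (cmod (G $ i $ k))\<^sup>2" for i k
    using hermitian_nth_swap[OF assms, of k i] complex_norm_square[of "G $ i $ k"]
    by (metis Re_complex_of_real)
  then show ?thesis by (simp add: trace_def matrix_matrix_mult_def)
qed

lemma trace_mult_mdiv: "trace (B ** mdiv E t) = trace (B ** E) / t"
  by (simp add: trace_def matrix_matrix_mult_def mdiv_def sum_divide_distrib)

lemma Re_trace_mult_normalized:
  assumes "hermitian E"
  shows "Re (trace (B ** mdiv E (trace E))) = Re (trace (E ** B)) / Re (trace E)"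
proof -
  have "Re (trace (E ** B) / trace E) = Re (trace (E ** B)) / Re (trace E)"
    by (metis trace_hermitian_real[OF assms] Re_divide_of_real)
  then show ?thesis by (simp add: trace_mult_mdiv trace_mul_sym[of B])
qed

lemma mdiv_scaleR_trace:
  assumes "c \<noteq> 0"
  shows "mdiv (c *\<^sub>R E) (trace (c *\<^sub>R E)) = mdiv E (trace E)"
proof -
  have "c *\<^sub>R x / (c *\<^sub>R y) = x / (y::complex)" for x y
    using assms by (simp add: scaleR_conv_of_real)
  then show ?thesis by (simp add: mdiv_def vec_eq_iff trace_scaleR)
qed

lemma bounded_linear_Re_trace_mult: "bounded_linear (\<lambda>E. Re (trace (E ** (B::'d::finite cmat))))"
  by (rule linear_conv_bounded_linear[THEN iffD1], rule linearI)
    (simp_all add: matrix_add_rdistrib trace_add scalar_matrix_assoc[symmetric] trace_scaleR)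

section \<open>The Banach algebra of complex matrices\<close>

text \<open>Complex matrices with the operator norm form a Banach algebra, so the library's \<open>exp\<close>
  applies to them; \<open>mexp\<close> is its transport along \<open>mrep\<close>.\<close>

typedef 'd cmat_alg = "UNIV :: ('d::finite) cmat set" morphisms mrep mabs by auto

setup_lifting type_definition_cmat_alg

instantiation cmat_alg :: (finite) real_normed_algebra_1
begin

lift_definition norm_cmat_alg :: "'a cmat_alg \<Rightarrow> real" is "\<lambda>A. onorm (\<lambda>x. A *v x)" .
lift_definition minus_cmat_alg :: "'a cmat_alg \<Rightarrow> 'a cmat_alg \<Rightarrow> 'a cmat_alg" is "(-)" .
lift_definition plus_cmat_alg :: "'a cmat_alg \<Rightarrow> 'a cmat_alg \<Rightarrow> 'a cmat_alg" is "(+)" .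
lift_definition uminus_cmat_alg :: "'a cmat_alg \<Rightarrow> 'a cmat_alg" is "uminus" .
lift_definition zero_cmat_alg :: "'a cmat_alg" is "0" .
lift_definition one_cmat_alg :: "'a cmat_alg" is "mat 1" .
lift_definition times_cmat_alg :: "'a cmat_alg \<Rightarrow> 'a cmat_alg \<Rightarrow> 'a cmat_alg" is "(**)" .
lift_definition scaleR_cmat_alg :: "real \<Rightarrow> 'a cmat_alg \<Rightarrow> 'a cmat_alg" is "scaleR" .

definition dist_cmat_alg :: "'a cmat_alg \<Rightarrow> 'a cmat_alg \<Rightarrow> real"
  where "dist_cmat_alg a b = norm (a - b)"

definition uniformity_cmat_alg :: "('a cmat_alg \<times> 'a cmat_alg) filter"
  where "uniformity_cmat_alg = (INF e\<in>{0 <..}. principal {(x, y). dist x y < e})"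

definition open_cmat_alg :: "'a cmat_alg set \<Rightarrow> bool"
  where "open_cmat_alg S = (\<forall>x\<in>S. \<forall>\<^sub>F (x', y) in uniformity. x' = x \<longrightarrow> y \<in> S)"

definition sgn_cmat_alg :: "'a cmat_alg \<Rightarrow> 'a cmat_alg"
  where "sgn_cmat_alg x = scaleR (inverse (norm x)) x"

instance
proof
  fix a b c :: "'a cmat_alg" and r s :: real
  show "a + b + c = a + (b + c)" by transfer (simp add: algebra_simps)
  show "a + b = b + a" by transfer (simp add: algebra_simps)
  show "0 + a = a" by transfer simp
  show "- a + a = 0" by transfer simp
  show "a - b = a + - b" by transfer simp
  show "r *\<^sub>R (a + b) = r *\<^sub>R a + r *\<^sub>R b" by transfer (simp add: scaleR_right_distrib)
  show "(r + s) *\<^sub>R a = r *\<^sub>R a + s *\<^sub>R a" by transfer (simp add: scaleR_left_distrib)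
  show "r *\<^sub>R s *\<^sub>R a = (r * s) *\<^sub>R a" by transfer simp
  show "1 *\<^sub>R a = a" by transfer simp
  show "a * b * c = a * (b * c)" by transfer (simp add: matrix_mul_assoc)
  show "(a + b) * c = a * c + b * c" by transfer (simp add: matrix_add_rdistrib)
  show "a * (b + c) = a * b + a * c" by transfer (simp add: matrix_add_ldistrib)
  show "r *\<^sub>R a * b = r *\<^sub>R (a * b)" by transfer (simp add: scalar_matrix_assoc)
  show "a * r *\<^sub>R b = r *\<^sub>R (a * b)" by transfer (simp add: matrix_scalar_ac scalar_matrix_assoc)
  show "1 * a = a" by transfer simp
  show "a * 1 = a" by transfer simp
  show "(0::'a cmat_alg) \<noteq> 1"
  proof transfer
    obtain i :: 'a where True by auto
    have "(mat 1 :: 'a cmat) $ i $ i = 1" by (simp add: mat_def)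
    then show "(0::'a cmat) \<noteq> mat 1" by auto
  qed
  show "dist a b = norm (a - b)" by (simp add: dist_cmat_alg_def)
  show "sgn a = inverse (norm a) *\<^sub>R a" by (simp add: sgn_cmat_alg_def)
  show "(uniformity :: ('a cmat_alg \<times> 'a cmat_alg) filter) = (INF e\<in>{0 <..}. principal {(x, y). dist x y < e})"
    by (simp add: uniformity_cmat_alg_def)
  show "open U = (\<forall>x\<in>U. \<forall>\<^sub>F (x', y) in uniformity. x' = x \<longrightarrow> y \<in> U)" for U :: "'a cmat_alg set"
    by (simp add: open_cmat_alg_def)
  note bl = bounded_linear_matrix_vector_mult
  show "(norm a = 0) = (a = 0)"
    by transfer (auto simp: onorm_eq_0[OF bl] matrix_eq_0_if_mult_vector_eq_0 onorm_zero)
  show "norm (a + b) \<le> norm a + norm b"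
  proof transfer
    fix A B :: "'a cmat"
    have "(\<lambda>x. (A + B) *v x) = (\<lambda>x. A *v x + B *v x)"
      by (simp add: matrix_vector_mult_add_rdistrib)
    then show "onorm (\<lambda>x. (A + B) *v x) \<le> onorm (\<lambda>x. A *v x) + onorm (\<lambda>x. B *v x)"
      using onorm_triangle[OF bl bl] by simp
  qed
  show "norm (r *\<^sub>R a) = \<bar>r\<bar> * norm a"
  proof transfer
    fix A :: "'a cmat" and t :: real
    have "(\<lambda>x. (t *\<^sub>R A) *v x) = (\<lambda>x. t *\<^sub>R (A *v x))"
      by (auto simp: vec_eq_iff matrix_vector_mult_def scaleR_sum_right)
    then show "onorm (\<lambda>x. (t *\<^sub>R A) *v x) = \<bar>t\<bar> * onorm (\<lambda>x. A *v x)"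
      using onorm_scaleR[OF bl] by simp
  qed
  show "norm (a * b) \<le> norm a * norm b"
  proof transfer
    fix A B :: "'a cmat"
    have "(\<lambda>x. (A ** B) *v x) = (\<lambda>x. A *v x) \<circ> (\<lambda>x. B *v x)"
      by (simp add: comp_def matrix_vector_mul_assoc)
    then show "onorm (\<lambda>x. (A ** B) *v x) \<le> onorm (\<lambda>x. A *v x) * onorm (\<lambda>x. B *v x)"
      using onorm_compose[OF bl bl] by (simp only:)
  qed
  show "norm (1::'a cmat_alg) = 1"
    by transfer (simp add: onorm_id)
qed

end

lemma mrep_add: "mrep (a + b) = mrep a + mrep b" by transfer simp

lemma mrep_scaleR: "mrep (r *\<^sub>R a) = r *\<^sub>R mrep a" by transfer simp

lemma mrep_one: "mrep 1 = mat 1" by transfer simp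

lemma mrep_mult: "mrep (a * b) = mrep a ** mrep b" by transfer simp

lemma mrep_power: "mrep (a ^ n) = mpow (mrep a) n" by (induction n) (simp_all add: mrep_one mrep_mult)

lemma mabs_add: "mabs (A + B) = mabs A + mabs B" by transfer simp

lemma mabs_scaleR: "mabs (r *\<^sub>R A) = r *\<^sub>R mabs A" by transfer simp

lemma mabs_mult: "mabs (A ** B) = mabs A * mabs B" by transfer simp

lemma mabs_mat_1: "mabs (mat 1) = 1" by transfer simp

lemma mabs_zero: "mabs 0 = 0" by transfer simp

lemma norm_cmat_alg_eq_onorm: "norm x = onorm (\<lambda>v. mrep x *v v)"
  by transfer simp

lemma bounded_linear_mrep: "bounded_linear (mrep :: 'd::finite cmat_alg \<Rightarrow> 'd cmat)"
proof
  show "\<exists>K. \<forall>x::'d cmat_alg. norm (mrep x) \<le> norm x * K"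
    using norm_matrix_le_onorm by (metis norm_cmat_alg_eq_onorm mult.commute)
qed (simp_all add: mrep_add mrep_scaleR)

lemma bounded_linear_mabs: "bounded_linear (mabs :: 'd::finite cmat \<Rightarrow> 'd cmat_alg)"
proof -
  have "linear (mabs :: 'd cmat \<Rightarrow> 'd cmat_alg)"
    by (rule linearI) (simp_all add: mabs_add mabs_scaleR)
  then show ?thesis by (rule linear_conv_bounded_linear[THEN iffD1])
qed

instance cmat_alg :: (finite) banach
proof
  fix X :: "nat \<Rightarrow> 'a cmat_alg"
  assume "Cauchy X"
  then have "Cauchy (\<lambda>n. mrep (X n))" by (rule bounded_linear.Cauchy[OF bounded_linear_mrep])
  then obtain L where "(\<lambda>n. mrep (X n)) \<longlonglongrightarrow> L" using convergent_eq_Cauchy convergent_def by blast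
  then have "(\<lambda>n. mabs (mrep (X n))) \<longlonglongrightarrow> mabs L"
    by (rule bounded_linear.tendsto[OF bounded_linear_mabs])
  then show "convergent X" by (auto simp: mrep_inverse convergent_def)
qed

lemma sums_mrep_exp: "(\<lambda>n. (1 / fact n) *\<^sub>R mpow A n) sums mrep (exp (mabs A))"
proof -
  have "(\<lambda>n. mrep (mabs A ^ n /\<^sub>R fact n)) sums mrep (exp (mabs A))"
    by (rule bounded_linear.sums[OF bounded_linear_mrep exp_converges])
  then show ?thesis by (simp add: mrep_scaleR mrep_power mabs_inverse divide_inverse)
qed

lemma mexp_eq_mrep_exp: "mexp A = mrep (exp (mabs A))"
  using sums_mrep_exp[of A] by (simp add: mexp_def sums_iff)

lemma sums_mexp: "(\<lambda>n. (1 / fact n) *\<^sub>R mpow A n) sums mexp (A::'d::finite cmat)"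
  using sums_mrep_exp[of A] by (simp add: mexp_eq_mrep_exp)

lemma mpow_Suc_right: "mpow A (Suc n) = mpow A n ** (A::'d::finite cmat)"
proof -
  have "mrep (mabs A ^ Suc n) = mrep (mabs A ^ n * mabs A)" by (simp only: power_Suc2)
  then show ?thesis by (simp add: mrep_power mrep_mult mabs_inverse)
qed

section \<open>Derivative of the exponential in a Banach algebra\<close>

fun pow_deriv :: "nat \<Rightarrow> 'a::real_normed_algebra_1 \<Rightarrow> 'a \<Rightarrow> 'a" where
  "pow_deriv 0 A H = 0"
| "pow_deriv (Suc n) A H = A * pow_deriv n A H + H * A ^ n"

lemma has_derivative_power_pow_deriv:
  "((\<lambda>x::'a::real_normed_algebra_1. x ^ n) has_derivative pow_deriv n A) (at A within S)"
proof (induction n)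
  case 0
  have "pow_deriv 0 A = (\<lambda>h. 0)" by auto
  then show ?case by simp
next
  case (Suc n)
  have "((\<lambda>x. x * x ^ n) has_derivative (\<lambda>h. A * pow_deriv n A h + h * A ^ n)) (at A within S)"
    using has_derivative_mult[OF has_derivative_ident Suc.IH] by simp
  then show ?case by simp
qed

lemma norm_pow_deriv_le:
  fixes A H :: "'a::real_normed_algebra_1"
  assumes "norm A \<le> K" "1 \<le> K"
  shows "norm (pow_deriv n A H) \<le> real n * K ^ n * norm H"
proof (induction n)
  case 0
  then show ?case by simp
next
  case (Suc n)
  have "norm (A ^ n) \<le> K ^ n"
    using norm_power_ineq[of A n] power_mono[OF assms(1), of n] by simp
  have "norm (pow_deriv (Suc n) A H) \<le> norm A * norm (pow_deriv n A H) + norm H * norm (A ^ n)"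
    by (simp add: norm_triangle_le norm_mult_ineq add_mono)
  also have "\<dots> \<le> K * (real n * K ^ n * norm H) + norm H * K ^ n"
    using Suc.IH assms \<open>norm (A ^ n) \<le> K ^ n\<close> by (intro add_mono mult_mono mult_left_mono) auto
  also have "\<dots> \<le> real (Suc n) * K ^ Suc n * norm H"
  proof -
    have "norm H * K ^ n \<le> norm H * K ^ Suc n"
      using assms(2) by (intro mult_left_mono power_increasing) auto
    then show ?thesis by (simp add: algebra_simps)
  qed
  finally show ?case .
qed

lemma norm_pow_deriv_div_fact_le:
  fixes A H :: "'a::real_normed_algebra_1"
  assumes "norm A \<le> R" "1 \<le> R"
  shows "norm (pow_deriv n A H /\<^sub>R fact n) \<le> (2 * R) ^ n / fact n * norm H"
proof -
  have "real n \<le> 2 ^ n"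
    using less_exp[of n] by (metis less_imp_le of_nat_le_iff of_nat_numeral of_nat_power)
  then have "real n * R ^ n \<le> (2 * R) ^ n"
    using assms(2) by (simp add: power_mult_distrib mult_right_mono)
  then have "norm (pow_deriv n A H) \<le> (2 * R) ^ n * norm H"
    using order_trans[OF norm_pow_deriv_le[OF assms] mult_right_mono[OF _ norm_ge_zero]] by blast
  then show ?thesis by (simp add: divide_simps mult.commute)
qed

lemma summable_pow_deriv_div_fact:
  fixes A :: "'a::{real_normed_algebra_1,banach}"
  shows "summable (\<lambda>n. pow_deriv n A H /\<^sub>R fact n)"
proof (rule summable_comparison_test')
  show "summable (\<lambda>n. (2 * (norm A + 1)) ^ n / fact n * norm H)"
    using summable_mult2[OF summable_exp[of "2 * (norm A + 1)"]] by (simp add: field_simps)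
  show "norm (pow_deriv n A H /\<^sub>R fact n) \<le> (2 * (norm A + 1)) ^ n / fact n * norm H" for n
    by (rule norm_pow_deriv_div_fact_le) simp_all
qed

definition exp_deriv :: "'a::{real_normed_algebra_1,banach} \<Rightarrow> 'a \<Rightarrow> 'a" where
  "exp_deriv A H = (\<Sum>n. pow_deriv n A H /\<^sub>R fact n)"

lemma eventually_norm_pow_deriv_series_tail_le:
  fixes R e :: real
  assumes R: "1 \<le> R" and "0 < e"
  shows "\<forall>\<^sub>F n in sequentially. \<forall>x\<in>ball (0::'a::{real_normed_algebra_1,banach}) R. \<forall>h.
    norm ((\<Sum>i<n. pow_deriv i x h /\<^sub>R fact i) - (\<Sum>i. pow_deriv i x h /\<^sub>R fact i)) \<le> e * norm h"
proof -
  define M where "M n = (2 * R) ^ n / fact n" for n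
  have M: "summable M"
    using summable_exp[of "2 * R"] by (simp add: M_def[abs_def] field_simps)
  obtain N where N: "\<And>n. N \<le> n \<Longrightarrow> norm (\<Sum>i. M (i + n)) < e"
    using suminf_exist_split[OF \<open>0 < e\<close> M] by blast
  show ?thesis
    unfolding eventually_sequentially
  proof (intro exI allI impI ballI)
    fix n :: nat and x h :: 'a
    assume n: "N \<le> n" and x: "x \<in> ball 0 R"
    have bound: "norm (pow_deriv i x h /\<^sub>R fact i) \<le> M i * norm h" for i
      using norm_pow_deriv_div_fact_le[of x R] x R by (simp add: M_def)
    have tail: "summable (\<lambda>i. M (i + n) * norm h)"
      using summable_ignore_initial_segment[OF summable_mult2[OF M]] by simp
    have "norm ((\<Sum>i<n. pow_deriv i x h /\<^sub>R fact i) - (\<Sum>i. pow_deriv i x h /\<^sub>R fact i))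
        = norm (\<Sum>i. pow_deriv (i + n) x h /\<^sub>R fact (i + n))"
      using suminf_minus_initial_segment[OF summable_pow_deriv_div_fact[of x h], of n]
      by (simp add: norm_minus_commute)
    also have "\<dots> \<le> (\<Sum>i. M (i + n) * norm h)"
      by (rule norm_suminf_le) (use bound tail in auto)
    also have "\<dots> = (\<Sum>i. M (i + n)) * norm h"
      by (rule suminf_mult2[symmetric]) (rule summable_ignore_initial_segment[OF M])
    also have "\<dots> \<le> e * norm h"
      using N[OF n] by (intro mult_right_mono) auto
    finally show "norm ((\<Sum>i<n. pow_deriv i x h /\<^sub>R fact i) - (\<Sum>i. pow_deriv i x h /\<^sub>R fact i))
        \<le> e * norm h" .
  qed
qed

text \<open>The exponential series is differentiated termwise: on a ball of radius \<open>R\<close> the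
  derivatives of its terms are dominated by the convergent series of \<open>(2 R)\<^sup>n / n!\<close>.\<close>

lemma has_derivative_exp_deriv:
  fixes A :: "'a::{real_normed_algebra_1,banach}"
  shows "(exp has_derivative exp_deriv A) (at A)"
proof -
  define R where "R = norm A + 1"
  define S where "S = ball (0::'a) R"
  have R: "1 \<le> R" by (simp add: R_def)
  have A: "A \<in> S" by (simp add: S_def R_def)
  have "\<exists>g. \<forall>x\<in>S. (\<lambda>n. x ^ n /\<^sub>R fact n) sums g x \<and> (g has_derivative exp_deriv x) (at x within S)"
    unfolding exp_deriv_def[abs_def]
  proof (rule has_derivative_series[where f' = "\<lambda>n x h. pow_deriv n x h /\<^sub>R fact n"])
    show "convex S" by (simp add: S_def)
    show "((\<lambda>x. x ^ n /\<^sub>R fact n) has_derivative (\<lambda>h. pow_deriv n x h /\<^sub>R fact n)) (at x within S)"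
      for n x
      by (intro has_derivative_scaleR_right has_derivative_power_pow_deriv)
    show "\<forall>\<^sub>F n in sequentially. \<forall>x\<in>S. \<forall>h. norm ((\<Sum>i<n. pow_deriv i x h /\<^sub>R fact i) -
        (\<Sum>i. pow_deriv i x h /\<^sub>R fact i)) \<le> e * norm h" if "0 < e" for e
      unfolding S_def by (rule eventually_norm_pow_deriv_series_tail_le[OF R that])
    show "A \<in> S" by (rule A)
    show "(\<lambda>n. A ^ n /\<^sub>R fact n) sums exp A" by (rule exp_converges)
  qed
  then obtain g where g_sums: "\<And>x. x \<in> S \<Longrightarrow> (\<lambda>n. x ^ n /\<^sub>R fact n) sums g x"
    and g_deriv: "(g has_derivative exp_deriv A) (at A within S)"
    using A by blast
  have "open S" by (simp add: S_def)
  have "(g has_derivative exp_deriv A) (at A)"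
    using g_deriv at_within_open[OF A \<open>open S\<close>] by simp
  moreover have "g x = exp x" if "x \<in> S" for x
    using sums_unique2[OF g_sums[OF that] exp_converges] .
  ultimately show ?thesis
    by (rule has_derivative_transform_within_open[OF _ \<open>open S\<close> A])
qed

text \<open>For a tracial functional the non-commutativity of the derivative of \<open>exp\<close> disappears.\<close>

lemma tracial_pow_deriv:
  fixes \<tau> :: "'a::real_normed_algebra_1 \<Rightarrow> 'b::real_normed_vector"
  assumes "linear \<tau>" and tracial: "\<And>x y. \<tau> (x * y) = \<tau> (y * x)"
    and "C * A = A * C"
  shows "\<tau> (C * pow_deriv (Suc n) A H) = real (Suc n) *\<^sub>R \<tau> (C * A ^ n * H)"
  using assms(3)
proof (induction n arbitrary: C)
  case 0
  then show ?case by simp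
next
  case (Suc n)
  have "(C * A) * A = A * (C * A)" using Suc.prems by (simp add: mult.assoc)
  note IH = Suc.IH[OF this]
  have "A ^ Suc n * C = C * A ^ Suc n"
    by (rule power_commuting_commutes) (rule Suc.prems[symmetric])
  then have swap: "\<tau> (C * (H * A ^ Suc n)) = \<tau> (C * A ^ Suc n * H)"
    by (metis tracial mult.assoc)
  have "\<tau> (C * pow_deriv (Suc (Suc n)) A H) = \<tau> ((C * A) * pow_deriv (Suc n) A H) + \<tau> (C * (H * A ^ Suc n))"
    using linear_add[OF assms(1)] by (simp add: distrib_left mult.assoc)
  also have "\<dots> = real (Suc n) *\<^sub>R \<tau> (C * A ^ Suc n * H) + \<tau> (C * A ^ Suc n * H)"
    by (simp only: IH swap) (simp add: mult.assoc)
  finally show ?case by (simp add: scaleR_add_left scaleR_2)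
qed

lemma tracial_exp_deriv:
  fixes \<tau> :: "'a::{real_normed_algebra_1,banach} \<Rightarrow> 'b::real_normed_vector"
  assumes \<tau>: "bounded_linear \<tau>" and tracial: "\<And>x y. \<tau> (x * y) = \<tau> (y * x)"
  shows "\<tau> (exp_deriv A H) = \<tau> (exp A * H)"
proof -
  have lin: "linear \<tau>" using \<tau> bounded_linear.linear by blast
  have "(\<lambda>n. \<tau> (pow_deriv n A H /\<^sub>R fact n)) sums \<tau> (exp_deriv A H)"
    unfolding exp_deriv_def
    by (rule bounded_linear.sums[OF \<tau> summable_sums[OF summable_pow_deriv_div_fact]])
  then have "(\<lambda>n. \<tau> (pow_deriv n A H /\<^sub>R fact n)) sums
      (\<tau> (exp_deriv A H) + \<tau> (pow_deriv 0 A H /\<^sub>R fact 0))"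
    by (simp add: linear_0[OF lin])
  then have "(\<lambda>n. \<tau> (pow_deriv (Suc n) A H /\<^sub>R fact (Suc n))) sums \<tau> (exp_deriv A H)"
    by (simp only: sums_Suc_iff[of "\<lambda>n. \<tau> (pow_deriv n A H /\<^sub>R fact n)"])
  moreover have "\<tau> (pow_deriv (Suc n) A H /\<^sub>R fact (Suc n)) = \<tau> ((A ^ n /\<^sub>R fact n) * H)" for n
    using tracial_pow_deriv[OF lin tracial, of 1 A n H]
    by (simp add: linear_scale[OF lin] del: of_nat_Suc)
  moreover have "(\<lambda>n. \<tau> ((A ^ n /\<^sub>R fact n) * H)) sums \<tau> (exp A * H)"
    by (rule bounded_linear.sums[OF bounded_linear_compose[OF \<tau> bounded_linear_mult_left]
          exp_converges])
  ultimately show ?thesis using sums_unique2 by fastforce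
qed

lemma mexp_add_commuting:
  assumes "A ** B = B ** (A::'d::finite cmat)"
  shows "mexp (A + B) = mexp A ** mexp B"
proof -
  have "mabs A * mabs B = mabs B * mabs A" using assms by (simp flip: mabs_mult)
  then show ?thesis by (simp add: mexp_eq_mrep_exp mabs_add exp_add_commuting mrep_mult)
qed

lemma mexp_zero: "mexp (0::'d::finite cmat) = mat 1"
  by (simp add: mexp_eq_mrep_exp mabs_zero mrep_one)

lemma mexp_scaleR_mat_1: "mexp (c *\<^sub>R mat 1 :: 'd::finite cmat) = exp c *\<^sub>R mat 1"
proof -
  have "mexp (c *\<^sub>R mat 1 :: 'd cmat) = mrep (exp (of_real c))"
    by (simp add: mexp_eq_mrep_exp of_real_def mabs_scaleR mabs_mat_1)
  also have "\<dots> = mrep (of_real (exp c))" by (simp only: exp_of_real)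
  finally show ?thesis by (simp add: of_real_def mrep_scaleR mrep_one)
qed

lemma mexp_neq_0: "mexp A \<noteq> (0::'d::finite cmat)"
proof
  assume "mexp A = 0"
  then have "exp (mabs A) = 0" by (metis mexp_eq_mrep_exp mabs_zero mrep_inverse)
  then show False using exp_minus_inverse[of "mabs A"] by simp
qed

lemma mexp_scaleR_square: "mexp (c *\<^sub>R A) ** mexp (c *\<^sub>R A) = mexp ((2 * c) *\<^sub>R (A::'d::finite cmat))"
proof -
  have "mexp (c *\<^sub>R A) ** mexp (c *\<^sub>R A) = mexp (c *\<^sub>R A + c *\<^sub>R A)"
    by (rule mexp_add_commuting[symmetric]) (rule refl)
  also have "c *\<^sub>R A + c *\<^sub>R A = (2 * c) *\<^sub>R A"
    by (metis mult_2 scaleR_add_left)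
  finally show ?thesis .
qed

lemma has_derivative_exp_mabs:
  "((\<lambda>A. exp (mabs A)) has_derivative (\<lambda>H. exp_deriv (mabs A) (mabs H))) (at (A::'d::finite cmat))"
  by (rule has_derivative_compose[OF bounded_linear_imp_has_derivative[OF bounded_linear_mabs]
        has_derivative_exp_deriv])

lemma differentiable_mexp: "mexp differentiable (at (A::'d::finite cmat))"
proof -
  have "(\<lambda>A. mrep (exp (mabs A))) differentiable (at A)"
    by (rule differentiable_compose[OF bounded_linear_imp_differentiable[OF bounded_linear_mrep]])
      (use has_derivative_exp_mabs in \<open>auto simp: differentiable_def\<close>)
  then show ?thesis by (simp add: mexp_eq_mrep_exp[abs_def])
qed

lemma has_derivative_trace_mexp:
  "((\<lambda>A. trace (mexp A)) has_derivative (\<lambda>H. trace (mexp A ** H))) (at (A::'d::finite cmat))"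
proof -
  have bl_trace: "bounded_linear (trace :: 'd cmat \<Rightarrow> complex)"
    by (rule linear_conv_bounded_linear[THEN iffD1], rule linearI)
      (simp_all add: trace_def sum.distrib scaleR_sum_right)
  define \<tau> :: "'d cmat_alg \<Rightarrow> complex" where "\<tau> x = trace (mrep x)" for x
  have \<tau>: "bounded_linear \<tau>"
    unfolding \<tau>_def[abs_def] by (rule bounded_linear_compose[OF bl_trace bounded_linear_mrep])
  have tracial: "\<tau> (x * y) = \<tau> (y * x)" for x y
    unfolding \<tau>_def mrep_mult by (rule trace_mul_sym)
  have "((\<lambda>A. \<tau> (exp (mabs A))) has_derivative (\<lambda>H. \<tau> (exp_deriv (mabs A) (mabs H)))) (at A)"
    by (rule bounded_linear.has_derivative[OF \<tau> has_derivative_exp_mabs])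
  moreover have "\<tau> (exp_deriv (mabs A) (mabs H)) = trace (mexp A ** H)" for H
  proof -
    have "\<tau> (exp_deriv (mabs A) (mabs H)) = \<tau> (exp (mabs A) * mabs H)"
      by (rule tracial_exp_deriv[OF \<tau> tracial])
    then show ?thesis by (simp add: \<tau>_def mrep_mult mabs_inverse mexp_eq_mrep_exp)
  qed
  ultimately show ?thesis by (simp add: \<tau>_def mexp_eq_mrep_exp)
qed

lemma mexp_scaleR_has_vector_derivative_0:
  "((\<lambda>t. mexp (t *\<^sub>R A)) has_vector_derivative (A::'d::finite cmat)) (at 0)"
proof -
  have "((\<lambda>t. exp (t *\<^sub>R mabs A)) has_vector_derivative exp (0 *\<^sub>R mabs A) * mabs A) (at 0)"
    by (rule exp_scaleR_has_vector_derivative_right)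
  then have "((\<lambda>t. mrep (exp (t *\<^sub>R mabs A))) has_vector_derivative mrep (mabs A)) (at 0)"
    using bounded_linear.has_vector_derivative[OF bounded_linear_mrep] by simp
  then show ?thesis by (simp add: mexp_eq_mrep_exp mabs_scaleR mabs_inverse)
qed

lemma adjoint_mat_mpow: "adjoint_mat (mpow A n) = mpow (adjoint_mat A) (n::nat)"
proof (induction n)
  case 0
  then show ?case by (simp add: adjoint_mat_def mat_def vec_eq_iff)
next
  case (Suc n)
  have "adjoint_mat (mpow A (Suc n)) = adjoint_mat (mpow A n) ** adjoint_mat A"
    by (simp add: adjoint_mat_mult)
  also have "\<dots> = mpow (adjoint_mat A) (Suc n)"
    by (simp only: Suc.IH mpow_Suc_right)
  finally show ?case .
qed

lemma adjoint_mat_mexp: "adjoint_mat (mexp A) = mexp (adjoint_mat (A::'d::finite cmat))"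
proof -
  have "(\<lambda>n. adjoint_mat ((1 / fact n) *\<^sub>R mpow A n)) sums adjoint_mat (mexp A)"
    by (rule bounded_linear.sums[OF bounded_linear_adjoint_mat sums_mexp])
  moreover have "adjoint_mat ((1 / fact n) *\<^sub>R mpow A n) = (1 / fact n) *\<^sub>R mpow (adjoint_mat A) n" for n
    by (simp only: adjoint_mat_scaleR adjoint_mat_mpow)
  ultimately have "(\<lambda>n. (1 / fact n) *\<^sub>R mpow (adjoint_mat A) n) sums adjoint_mat (mexp A)"
    by simp
  then show ?thesis by (rule sums_unique2[OF _ sums_mexp])
qed

lemma hermitian_mexp: "hermitian H \<Longrightarrow> hermitian (mexp H)"
  by (simp add: hermitian_def adjoint_mat_mexp)

lemma trace_mexp_pos:
  assumes "hermitian H"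
  shows "0 < Re (trace (mexp H))"
proof -
  define G where "G = mexp ((1/2) *\<^sub>R H)"
  obtain i0 k0 where "G $ i0 $ k0 \<noteq> 0"
    using mexp_neq_0 unfolding G_def by (metis vec_eq_iff zero_index)
  then have row: "0 < (\<Sum>k\<in>UNIV. (cmod (G $ i0 $ k))\<^sup>2)"
    by (intro sum_pos2[where i=k0]) auto
  have "0 < (\<Sum>i\<in>UNIV. \<Sum>k\<in>UNIV. (cmod (G $ i $ k))\<^sup>2)"
    by (rule sum_pos2[where f = "\<lambda>i. \<Sum>k\<in>UNIV. (cmod (G $ i $ k))\<^sup>2", OF _ _ row])
      (auto intro: sum_nonneg)
  also have "\<dots> = Re (trace (G ** G))"
    by (simp add: G_def Re_trace_square_hermitian hermitian_mexp hermitian_scaleR assms)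
  also have "G ** G = mexp H" by (simp add: G_def mexp_scaleR_square)
  finally show ?thesis .
qed

text \<open>\<open>exp (K/2\<^sup>n\<^sup>+\<^sup>1)\<close> is the square of the Hermitian matrix \<open>exp (K/2\<^sup>n\<^sup>+\<^sup>2)\<close>, whose fourth
  power \<open>exp (K/2\<^sup>n)\<close> is \<open>1\<close> by induction.\<close>

lemma mexp_halves_eq_mat_1:
  assumes K: "hermitian K" and "mexp K = (mat 1 :: 'd::finite cmat)"
  shows "mexp ((1/2) ^ n *\<^sub>R K) = mat 1"
proof (induction n)
  case 0
  then show ?case using assms(2) by simp
next
  case (Suc n)
  define G where "G = mexp ((1/2) ^ Suc (Suc n) *\<^sub>R K)"
  have "G ** G = mexp ((1/2) ^ Suc n *\<^sub>R K)"
    by (simp add: G_def mexp_scaleR_square)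
  moreover have "(G ** G) ** (G ** G) = mat 1"
    by (simp only: calculation mexp_scaleR_square) (simp add: Suc.IH)
  moreover have "hermitian G" by (simp add: G_def hermitian_mexp hermitian_scaleR K)
  ultimately show ?case using hermitian_square_eq_mat_1 by metis
qed

text \<open>The difference quotients of \<open>t \<mapsto> exp (t K)\<close> at \<open>0\<close> tend to \<open>K\<close> but vanish along \<open>t = 2\<^sup>-\<^sup>n\<close>.\<close>

lemma eq_0_if_mexp_halves_eq_mat_1:
  assumes halves: "\<And>n. mexp ((1/2) ^ n *\<^sub>R K) = (mat 1 :: 'd::finite cmat)"
  shows "K = 0"
proof -
  define f where "f = (\<lambda>t::real. mexp (t *\<^sub>R K))"
  have "(f has_derivative (\<lambda>t. t *\<^sub>R K)) (at 0)"
    using mexp_scaleR_has_vector_derivative_0 by (simp add: f_def has_vector_derivative_def)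
  then have "((\<lambda>t. norm (f t - f 0 - (t - 0) *\<^sub>R K) / norm (t - 0)) \<longlongrightarrow> 0) (at 0)"
    by (rule has_derivative_iff_norm[THEN iffD1, THEN conjunct2])
  moreover have "filterlim (\<lambda>n. (1/2::real) ^ n) (at 0) sequentially"
    unfolding filterlim_at by (auto intro: LIMSEQ_realpow_zero)
  ultimately have "(\<lambda>n. norm (f ((1/2) ^ n) - f 0 - ((1/2) ^ n - 0) *\<^sub>R K) / norm ((1/2::real) ^ n - 0))
      \<longlonglongrightarrow> 0"
    by (rule filterlim_compose)
  moreover have "norm (f ((1/2) ^ n) - f 0 - ((1/2) ^ n - 0) *\<^sub>R K) / norm ((1/2::real) ^ n - 0) = norm K"
    for n
    using halves[of n] by (simp add: f_def mexp_zero)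
  ultimately show ?thesis by (simp add: LIMSEQ_const_iff)
qed

lemma hermitian_eq_0_if_mexp_eq_mat_1:
  assumes "hermitian K" and "mexp K = (mat 1 :: 'd::finite cmat)"
  shows "K = 0"
  by (rule eq_0_if_mexp_halves_eq_mat_1) (rule mexp_halves_eq_mat_1[OF assms])

lemma mlog_maxmixed: "mlog (maxmixed :: 'd::finite cmat) = (- ln (real CARD('d))) *\<^sub>R mat 1"
proof -
  define d where "d = real CARD('d)"
  have d: "0 < d" by (simp add: d_def)
  have herm_1: "hermitian (mat 1 :: 'd cmat)"
    by (simp add: hermitian_def adjoint_mat_def mat_def vec_eq_iff)
  have exp_mlog: "mexp ((- ln d) *\<^sub>R mat 1 :: 'd cmat) = maxmixed"
    unfolding mexp_scaleR_mat_1 by (simp add: exp_minus maxmixed_def d_def inverse_eq_divide)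
  have unique: "H = (- ln d) *\<^sub>R mat 1" if H: "hermitian H" and "mexp H = (maxmixed :: 'd cmat)" for H
  proof -
    have "H ** ((ln d) *\<^sub>R mat 1) = ((ln d) *\<^sub>R mat 1) ** H"
      by (rule scaleR_mat_1_commute[symmetric])
    then have "mexp (H + (ln d) *\<^sub>R mat 1) = maxmixed ** (exp (ln d) *\<^sub>R mat 1)"
      by (simp add: mexp_add_commuting mexp_scaleR_mat_1 \<open>mexp H = maxmixed\<close>)
    also have "\<dots> = mat 1"
      using d by (simp add: maxmixed_def d_def matrix_scalar_ac scalar_matrix_assoc[symmetric])
    finally have "H + (ln d) *\<^sub>R mat 1 = 0"
      by (rule hermitian_eq_0_if_mexp_eq_mat_1[OF hermitian_add[OF H hermitian_scaleR[OF herm_1]]])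
    then show ?thesis by (simp add: eq_neg_iff_add_eq_0)
  qed
  have "mlog (maxmixed :: 'd cmat) = (- ln d) *\<^sub>R mat 1"
    unfolding mlog_def
  proof (rule the_equality)
    show "hermitian ((- ln d) *\<^sub>R mat 1 :: 'd cmat) \<and> mexp ((- ln d) *\<^sub>R mat 1 :: 'd cmat) = maxmixed"
      by (rule conjI[OF hermitian_scaleR[OF herm_1] exp_mlog])
  qed (use unique in blast)
  then show ?thesis by (simp add: d_def)
qed

lemma mexp_mlog_maxmixed_add: "mexp (mlog maxmixed + A) = (1 / real CARD('d)) *\<^sub>R mexp (A::'d::finite cmat)"
proof -
  have "mexp (mlog maxmixed + A) = (exp (- ln (real CARD('d))) *\<^sub>R mat 1) ** mexp A"
    unfolding mlog_maxmixed mexp_add_commuting[OF scaleR_mat_1_commute] mexp_scaleR_mat_1 ..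
  then show ?thesis
    by (simp add: mexp_scaleR_mat_1 exp_minus inverse_eq_divide scalar_matrix_assoc[symmetric])
qed

section \<open>Jacobian of a logarithmic update\<close>

lemma vec_lambda_eq_sum_axis: "(\<chi> j. c j) = (\<Sum>j\<in>UNIV. c j *\<^sub>R axis j (1::real))"
proof -
  have "(\<Sum>j\<in>UNIV. c j *\<^sub>R axis j (1::real)) $ i = (\<Sum>j\<in>UNIV. if j = i then c j else 0)" for i
    unfolding sum_component by (rule sum.cong) (auto simp: axis_def)
  then show ?thesis by (simp add: vec_eq_iff)
qed

lemma has_derivative_vec_lambda:
  fixes f :: "'k::finite \<Rightarrow> 'a::real_normed_vector \<Rightarrow> real"
  assumes "\<And>j. (f j has_derivative f' j) (at x within S)"
  shows "((\<lambda>x. \<chi> j. f j x) has_derivative (\<lambda>h. \<chi> j. f' j h)) (at x within S)"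
  unfolding vec_lambda_eq_sum_axis
  by (intro has_derivative_sum has_derivative_scaleR_left assms)

lemma differentiable_vec_lambda:
  fixes f :: "'k::finite \<Rightarrow> 'a::real_normed_vector \<Rightarrow> real"
  assumes "\<And>j. f j differentiable (at x within S)"
  shows "(\<lambda>x. \<chi> j. f j x) differentiable (at x within S)"
  unfolding vec_lambda_eq_sum_axis
  by (intro differentiable_sum differentiable_scaleR differentiable_const ballI assms) simp

definition diag_mat :: "real^'k \<Rightarrow> real^'k^'k::finite" where
  "diag_mat v = (\<chi> i j. if i = j then v $ j else 0)"

lemma diag_mat_mult: "diag_mat v ** A = (\<chi> i j. v $ i * A $ i $ j)"
proof -
  have "(\<Sum>k\<in>UNIV. (if i = k then v $ k else 0) * A $ k $ j)
      = (\<Sum>k\<in>UNIV. if i = k then v $ k * A $ k $ j else 0)" for i j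
    by (rule sum.cong) auto
  then show ?thesis by (simp add: diag_mat_def matrix_matrix_mult_def)
qed

lemma diag_mat_mult_diag_mat: "diag_mat v ** diag_mat w = diag_mat (\<chi> j. v $ j * w $ j)"
  by (simp add: diag_mat_mult vec_eq_iff) (simp add: diag_mat_def)

lemma matrix_inv_diag_mat:
  assumes "\<And>j. v $ j \<noteq> 0"
  shows "matrix_inv (diag_mat v) = diag_mat (\<chi> j. inverse (v $ j))"
proof -
  have "diag_mat (\<chi> j. 1) = (mat 1 :: real^'k^'k)" by (simp add: diag_mat_def mat_def vec_eq_iff)
  then have inv: "diag_mat v ** diag_mat (\<chi> j. inverse (v $ j)) = mat 1 \<and>
      diag_mat (\<chi> j. inverse (v $ j)) ** diag_mat v = mat 1"
    using assms by (simp add: diag_mat_mult_diag_mat)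
  then have "diag_mat v ** matrix_inv (diag_mat v) = mat 1 \<and> matrix_inv (diag_mat v) ** diag_mat v = mat 1"
    unfolding matrix_inv_def by (rule someI)
  then show ?thesis
    using inv by (metis matrix_mul_assoc matrix_mul_lid matrix_mul_rid)
qed

lemma jacobian_id_plus_const_minus_ln:
  fixes g :: "real^'k::finite \<Rightarrow> real^'k" and a :: "'k \<Rightarrow> real"
  assumes "g differentiable (at x)" and pos: "\<And>j. 0 < g x $ j"
  defines "f \<equiv> \<lambda>y. y + (\<chi> j. a j - ln (g y $ j))"
  shows "f differentiable (at x) \<and> jacobian f (at x) = mat 1 - matrix_inv (diag_mat (g x)) ** jacobian g (at x)"
proof -
  obtain g' where g': "(g has_derivative g') (at x)" using assms(1) by (auto simp: differentiable_def)
  define f' where "f' h = h + (\<chi> j. 0 - g' h $ j * inverse (g x $ j))" for h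
  have "((\<lambda>y. ln (g y $ j)) has_derivative (\<lambda>h. g' h $ j * inverse (g x $ j))) (at x)" for j
    by (rule DERIV_compose_FDERIV[where g = "\<lambda>y. g y $ j", OF DERIV_ln[OF pos]
          bounded_linear.has_derivative[OF bounded_linear_vec_nth g']])
  then have "((\<lambda>y. a j - ln (g y $ j)) has_derivative (\<lambda>h. 0 - g' h $ j * inverse (g x $ j))) (at x)" for j
    by (intro has_derivative_diff has_derivative_const)
  then have f': "(f has_derivative f') (at x)"
    unfolding f_def f'_def[abs_def] by (intro has_derivative_add has_derivative_ident has_derivative_vec_lambda)
  have "matrix f' = mat 1 - diag_mat (\<chi> j. inverse (g x $ j)) ** matrix g'"
    by (simp add: f'_def matrix_def diag_mat_mult mat_def vec_eq_iff axis_def mult.commute)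
  moreover have "matrix_inv (diag_mat (g x)) = diag_mat (\<chi> j. inverse (g x $ j))"
    using pos by (simp add: matrix_inv_diag_mat less_imp_neq[symmetric])
  ultimately have "jacobian f (at x) = mat 1 - matrix_inv (diag_mat (g x)) ** jacobian g (at x)"
    by (simp add: jacobian_def frechet_derivative_at[OF f', symmetric] frechet_derivative_at[OF g', symmetric])
  with f' show ?thesis by (auto simp: differentiable_def)
qed

section \<open>The log-partition function\<close>

lemma hermitian_lin_comb: "(\<And>j. hermitian (F j)) \<Longrightarrow> hermitian (lin_comb l F)"
  unfolding lin_comb_def by (intro hermitian_sum hermitian_scaleR)

lemma bounded_linear_lin_comb: "bounded_linear (\<lambda>l. lin_comb l F)"
  by (rule linear_conv_bounded_linear[THEN iffD1], rule linearI)
    (simp_all add: lin_comb_def scaleR_add_left sum.distrib scaleR_sum_right)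

lemma lin_comb_axis: "lin_comb (axis j 1) F = F j"
proof -
  have "lin_comb (axis j 1) F = (\<Sum>i\<in>UNIV. if i = j then F i else 0)"
    unfolding lin_comb_def by (rule sum.cong) (auto simp: axis_def)
  then show ?thesis by simp
qed

lemma has_derivative_log_partition:
  assumes "\<And>j. hermitian (F j)"
  shows "(log_partition F has_derivative
      (\<lambda>h. Re (trace (mexp (lin_comb l F) ** lin_comb h F)) / Re (trace (mexp (lin_comb l F))))) (at l)"
proof -
  have "((\<lambda>l. trace (mexp (lin_comb l F))) has_derivative
      (\<lambda>h. trace (mexp (lin_comb l F) ** lin_comb h F))) (at l)"
    by (rule has_derivative_compose[OF bounded_linear_imp_has_derivative[OF bounded_linear_lin_comb]
          has_derivative_trace_mexp])
  then have "((\<lambda>l. Re (trace (mexp (lin_comb l F)))) has_derivative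
      (\<lambda>h. Re (trace (mexp (lin_comb l F) ** lin_comb h F)))) (at l)"
    by (rule bounded_linear.has_derivative[OF bounded_linear_Re])
  from DERIV_compose_FDERIV[OF DERIV_ln[OF trace_mexp_pos[OF hermitian_lin_comb[OF assms]]] this]
  show ?thesis by (simp add: log_partition_def[abs_def] divide_inverse)
qed

lemma gradient_log_partition:
  assumes "\<And>j. hermitian (F j)"
  shows "gradient (log_partition F) l = (\<chi> j. Re (trace (F j ** xi_state F l)))"
proof -
  have "hermitian (mexp (lin_comb l F))" by (intro hermitian_mexp hermitian_lin_comb assms)
  then show ?thesis
    unfolding gradient_def frechet_derivative_at[OF has_derivative_log_partition[of F, OF assms], symmetric]
      xi_state_def lin_comb_axis by (simp only: Re_trace_mult_normalized)
qed

lemma differentiable_gradient_log_partition: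
  assumes "\<And>j. hermitian (F j)"
  shows "gradient (log_partition F) differentiable (at l)"
proof -
  have "(\<lambda>l. mexp (lin_comb l F)) differentiable (at l)"
    by (rule differentiable_compose[OF differentiable_mexp
          bounded_linear_imp_differentiable[OF bounded_linear_lin_comb]])
  then have "(\<lambda>l. Re (trace (mexp (lin_comb l F) ** B))) differentiable (at l)" for B
    by (rule differentiable_compose[OF bounded_linear_imp_differentiable[OF bounded_linear_Re_trace_mult]])
  note num = this
  have den: "(\<lambda>l. Re (trace (mexp (lin_comb l F)))) differentiable (at l)"
    using num[of "mat 1"] by simp
  have "Re (trace (mexp (lin_comb l F))) \<noteq> 0"
    using trace_mexp_pos[OF hermitian_lin_comb[of F, OF assms]] by (simp add: less_imp_neq[symmetric])
  then have "(\<lambda>l. Re (trace (mexp (lin_comb l F) ** F j)) / Re (trace (mexp (lin_comb l F))))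
      differentiable (at l)" for j
    by (rule differentiable_divide[OF num den])
  then have "(\<lambda>l. \<chi> j. Re (trace (mexp (lin_comb l F) ** F j)) / Re (trace (mexp (lin_comb l F))))
      differentiable (at l)"
    by (rule differentiable_vec_lambda)
  moreover have "gradient (log_partition F) =
      (\<lambda>l. \<chi> j. Re (trace (mexp (lin_comb l F) ** F j)) / Re (trace (mexp (lin_comb l F))))"
    using hermitian_mexp[OF hermitian_lin_comb[of F, OF assms]]
    by (simp add: fun_eq_iff gradient_log_partition[of F, OF assms] xi_state_def Re_trace_mult_normalized)
  ultimately show ?thesis by simp
qed

lemma Re_hs_inner_qis_state_eq_gradient:
  assumes "\<And>j. hermitian (F j)"
  shows "Re (hs_inner (F j) (mdiv (mexp (mlog maxmixed + lin_comb l F))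
      (trace (mexp (mlog maxmixed + lin_comb l F))))) = gradient (log_partition F) l $ j"
proof -
  have "hs_inner (F j) X = trace (F j ** X)" for X
    using assms[of j] by (simp add: hs_inner_def hermitian_def)
  moreover have "mdiv (mexp (mlog maxmixed + lin_comb l F)) (trace (mexp (mlog maxmixed + lin_comb l F)))
      = xi_state F l"
    unfolding mexp_mlog_maxmixed_add xi_state_def by (rule mdiv_scaleR_trace) simp
  ultimately show ?thesis by (simp add: gradient_log_partition[of F, OF assms])
qed

theorem theorem4p1:
  fixes F :: "'k::finite \<Rightarrow> complex^'d::finite^'d"
    and \<rho>0 :: "complex^'d^'d"
    and lam :: "real^'k"
  assumes F_psd: "\<forall>j. psd (F j)"
    and F_sum: "loewner_le (\<Sum>j\<in>UNIV. F j) (mat 1)"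
    and rho0: "density_matrix \<rho>0"
    and pos_rho: "\<forall>j. 0 < Re (hs_inner (F j) \<rho>0)"
    and pos_Y: "\<forall>j. 0 < Re (hs_inner (F j)
               (mdiv (mexp (mlog maxmixed + lin_comb lam F))
                     (trace (mexp (mlog maxmixed + lin_comb lam F)))))"
  shows "qis_map F \<rho>0 differentiable (at lam) \<and>
         jacobian (qis_map F \<rho>0) (at lam) =
           mat 1 - matrix_inv (P_mat F lam) ** hessian (log_partition F) lam"
proof -
  have herm: "\<And>j. hermitian (F j)" using F_psd by (simp add: psd_def)
  let ?g = "gradient (log_partition F)"
  have "qis_map F \<rho>0 = (\<lambda>l. l + (\<chi> j. ln (Re (hs_inner (F j) \<rho>0)) - ln (?g l $ j)))"
    by (simp add: fun_eq_iff qis_map_def Let_def Re_hs_inner_qis_state_eq_gradient[of F, OF herm])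
  moreover have "P_mat F lam = diag_mat (?g lam)"
    by (simp add: P_mat_def diag_mat_def vec_eq_iff gradient_log_partition[of F, OF herm])
  moreover have "0 < ?g lam $ j" for j
    using pos_Y Re_hs_inner_qis_state_eq_gradient[of F, OF herm] by simp
  ultimately show ?thesis
    unfolding hessian_def
    using jacobian_id_plus_const_minus_ln[OF differentiable_gradient_log_partition[of F, OF herm]] by simp
qed

end
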